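(* Let $v_1,v_2,v_3$ be positive integers with $\gcd(v_1,v_2,v_3)=1$, and suppose that no two of these speeds have a common factor greater than $2$ (i.e. $\gcd(v_i,v_j)\le 2$ for $i\ne j$). Let $r=\left\lfloor\frac{v_1+v_2}{3}\right\rfloor$, and let $L=\max_{m\in\mathbb{Z}}\min_{1\le i\le 3}\left\Vert \frac{m}{v_1+v_2}v_i\right\Vert$ be the maximum loneliness achieved at a time of the form $t=\frac{m}{v_1+v_2}$ with $m\in\mathbb{Z}$. Then: if $v_3$ is a multiple of $v_1+v_2$, then $L=0$; and if $v_3$ is not a multiple of $v_1+v_2$, then $L\ge\frac{r}{v_1+v_2}$.
   Context: For a real number $x$, $\Vert x\Vert$ denotes the distance from $x$ to the nearest integer. *)

theory Defs
  imports Complex_Main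
begin

definition dist_nint :: "real \<Rightarrow> real" where
  "dist_nint x = min (x - of_int \<lfloor>x\<rfloor>) (of_int \<lceil>x\<rceil> - x)"

definition loneliness3 :: "nat \<Rightarrow> nat \<Rightarrow> nat \<Rightarrow> real \<Rightarrow> real" where
  "loneliness3 v1 v2 v3 t =
     min (dist_nint (t * real v1)) (min (dist_nint (t * real v2)) (dist_nint (t * real v3)))"

end

theory Submission
  imports Defs
begin

(*
  At a time m/n with n = v1 + v2 the second runner sits at -m v1/n modulo 1, so it suffices to
  find m for which the residues of m v1 and m v3 modulo n both lie in the window [r, n - r].
  If v1 or v3 is invertible modulo n, substituting m = u x with u its inverse reduces this to
  placing x and c x in the window for a fixed c that is not a multiple of n, and by symmetry
  0 < c <= n/2.  For small c the multiples of c cannot jump over the window; for larger c,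
  missing it would make the low residues decrease steadily for too long.  Otherwise
  gcd v1 v2 = 2, so v1 is even, v3 is odd and d = gcd v3 n > 1, and m can be chosen with
  m v3 = n/2 and m v1 = (n/d) (d div 2) in [n/3, n/2] modulo n.
*)

lemma frac_of_int_divide:
  fixes k n :: int
  assumes "0 < n"
  shows "frac (real_of_int k / of_int n) = of_int (k mod n) / of_int n"
proof -
  have "k = n * (k div n) + k mod n" by simp
  then have "real_of_int k = of_int n * of_int (k div n) + of_int (k mod n)"
    by (metis of_int_add of_int_mult)
  then show ?thesis unfolding frac_def floor_divide_of_int_eq using assms by (simp add: field_simps)
qed

lemma dist_nint_divide:
  fixes k n :: int
  assumes "0 < n"
  shows "dist_nint (of_int k / of_int n)
    = min (of_int (k mod n) / of_int n) (of_int ((- k) mod n) / of_int n)"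
proof -
  have "real_of_int \<lceil>real_of_int k / of_int n\<rceil> - of_int k / of_int n
      = of_int ((- k) mod n) / of_int n"
    using frac_of_int_divide[OF assms, of "- k"] by (simp add: frac_def ceiling_def)
  then show ?thesis
    unfolding dist_nint_def frac_def[symmetric] frac_of_int_divide[OF assms] by simp
qed

lemma dist_nint_nonneg: "0 \<le> dist_nint x"
  unfolding dist_nint_def by simp

lemma dist_nint_le_one: "dist_nint x \<le> 1"
proof -
  have "x - of_int \<lfloor>x\<rfloor> < 1" by linarith
  then show ?thesis unfolding dist_nint_def by linarith
qed

lemma dist_nint_of_int [simp]: "dist_nint (of_int k) = 0"
  unfolding dist_nint_def by simp

definition mid_mod :: "int \<Rightarrow> int \<Rightarrow> int \<Rightarrow> bool" where
  "mid_mod n r k \<longleftrightarrow> r \<le> k mod n \<and> k mod n \<le> n - r"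

lemma mid_mod_uminus:
  assumes "0 < n" "mid_mod n r k"
  shows "mid_mod n r (- k)"
  using assms by (auto simp: mid_mod_def zmod_zminus1_eq_if)

lemma mid_mod_add_mult_self [simp]: "mid_mod n r (k + j * n) \<longleftrightarrow> mid_mod n r k"
  by (simp add: mid_mod_def)

lemma mid_mod_of_bounds:
  assumes "0 \<le> r" "r \<le> k" "k \<le> n - r"
  shows "mid_mod n r k"
proof (cases "k = n")
  case True
  then show ?thesis using assms by (simp add: mid_mod_def)
next
  case False
  then show ?thesis using assms by (simp add: mid_mod_def mod_pos_pos_trivial)
qed

lemma dist_nint_ge_if_mid_mod:
  fixes k n r :: int
  assumes "0 < n" "mid_mod n r k"
  shows "of_int r / of_int n \<le> dist_nint (of_int k / of_int n)"
  using mid_mod_uminus[OF assms] assms unfolding dist_nint_divide[OF assms(1)] mid_mod_def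
  by (simp add: divide_right_mono)

(* The walk c r, c (r + 1), ... modulo n moves in steps c no longer than the window, so it cannot
   jump over it; starting at most 2r - 1 below r, it enters within r steps. *)
lemma exists_mid_mod_mult_small:
  fixes n c r :: int
  assumes r: "r = n div 3" and r_pos: "0 < r" and c: "1 \<le> c" "c \<le> n - 2*r + 1"
  shows "\<exists>x. r \<le> x \<and> x \<le> n - r \<and> mid_mod n r (c * x)"
proof -
  have n3: "3*r \<le> n" using r by simp
  define \<rho> where "\<rho> = (c*r) mod n"
  have \<rho>: "0 \<le> \<rho>" "\<rho> < n" using n3 r_pos by (simp_all add: \<rho>_def)
  show ?thesis
  proof (cases "r \<le> \<rho> \<and> \<rho> \<le> n - r")
    case True
    then show ?thesis using n3 by (intro exI[of _ r]) (simp add: mid_mod_def \<rho>_def)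
  next
    case False
    have c2: "2 \<le> c"
    proof (rule ccontr)
      assume "\<not> 2 \<le> c"
      then have "c = 1" using c by simp
      then have "\<rho> = r" using n3 r_pos by (simp add: \<rho>_def mod_pos_pos_trivial)
      then show False using False n3 r_pos by simp
    qed
    define \<delta> where "\<delta> = (if \<rho> < r then r - \<rho> else n + r - \<rho>)"
    have \<delta>: "1 \<le> \<delta>" "\<delta> \<le> 2*r - 1" using False \<rho> by (auto simp: \<delta>_def)
    define k where "k = (\<delta> + c - 1) div c"
    have "\<delta> + c - 1 = c*k + (\<delta> + c - 1) mod c" "0 \<le> (\<delta> + c - 1) mod c" "(\<delta> + c - 1) mod c < c"
      using c by (simp_all add: k_def)
    then have ck: "\<delta> \<le> c*k" "c*k \<le> \<delta> + c - 1" by linarith+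
    have "c*k < c*(r + 1)"
    proof -
      have "2*r \<le> c*r" using c2 r_pos by simp
      moreover have "c*(r + 1) = c*r + c" by (simp add: algebra_simps)
      ultimately show ?thesis using ck \<delta> by linarith
    qed
    then have k: "k \<le> r" using c by simp
    have "0 < c*k" using ck \<delta> by linarith
    then have "0 \<le> k" using c by (simp add: zero_less_mult_iff)
    have "(c*(r + k)) mod n = (\<rho> + c*k) mod n"
      by (simp add: \<rho>_def distrib_left mod_add_left_eq)
    also have "\<dots> = (r + (c*k - \<delta>) + (if \<rho> < r then 0 else n)) mod n"
      by (simp add: \<delta>_def add.commute)
    also have "\<dots> = (r + (c*k - \<delta>)) mod n"
      by simp
    also have "\<dots> = r + (c*k - \<delta>)"
      using ck c r_pos by (intro mod_pos_pos_trivial) linarith+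
    finally have "mid_mod n r (c*(r + k))"
      using ck c unfolding mid_mod_def by linarith
    then show ?thesis using k \<open>0 \<le> k\<close> n3 by (intro exI[of _ "r + k"]) simp
  qed
qed

lemma mult_mod_two_steps:
  fixes n c r p :: int
  assumes n3: "3*r \<le> n" and c: "n - 2*r + 2 \<le> c" "2*c < n"
    and low: "(c*p) mod n < r" and not_mid: "\<not> mid_mod n r (c*(p + 1))"
  shows "n - r < (c*p) mod n + c" "(c*(p + 2)) mod n = (c*p) mod n - (n - 2*c)"
proof -
  define w where "w = (c*p) mod n"
  have n: "0 < n" using n3 c by linarith
  have w: "0 \<le> w" using n by (simp add: w_def)
  have "(c*(p + 1)) mod n = (w + c) mod n"
    by (simp add: w_def distrib_left mod_add_left_eq)
  also have "\<dots> = w + c"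
    using w low c n3 by (intro mod_pos_pos_trivial) (linarith+, simp add: w_def)
  finally have "\<not> (r \<le> w + c \<and> w + c \<le> n - r)"
    using not_mid unfolding mid_mod_def by simp
  then show high: "n - r < w + c" using w c n3 by arith
  have "(c*(p + 2)) mod n = (w + 2*c) mod n"
    by (simp add: w_def distrib_left mod_add_left_eq mult.commute)
  also have "\<dots> = (w + 2*c - n) mod n" by (simp add: minus_mod_self2)
  also have "\<dots> = w + 2*c - n"
    using high low c n3 by (intro mod_pos_pos_trivial) (linarith+, simp add: w_def)
  finally show "(c*(p + 2)) mod n = w - (n - 2*c)" by simp
qed

(* If no x in the window works, the residues c x mod n alternate between [0, r) and (n - r, n)
   and the low ones drop by n - 2c every two steps; across the window this contradicts 2c < n. *)
lemma exists_mid_mod_mult_large: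
  fixes n c r :: int
  assumes r: "r = n div 3" and r_pos: "0 < r" and c: "n - 2*r + 2 \<le> c" "2*c < n"
  shows "\<exists>x. r \<le> x \<and> x \<le> n - r \<and> mid_mod n r (c * x)"
proof (rule ccontr)
  assume "\<not> ?thesis"
  then have not_mid: "\<not> mid_mod n r (c*x)" if "r \<le> x" "x \<le> n - r" for x
    using that by blast
  define w where "w x = (c*x) mod n" for x
  define d where "d = n - 2*c"
  have n3: "3*r \<le> n" using r by simp
  have d: "1 \<le> d" using c by (simp add: d_def)
  have wide: "2 \<le> n - 2*r" using c n3 by linarith
  have two_steps: "n - r < w p + c \<and> w (p + 2) = w p - d"
    if "r \<le> p + 1" "p + 1 \<le> n - r" "w p < r" for p
    using mult_mod_two_steps[OF n3 c] not_mid that unfolding w_def d_def by blast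
  obtain p where p: "p = r \<or> p = r + 1" "w p < r"
  proof (cases "w r < r")
    case True
    then show ?thesis using that by blast
  next
    case False
    then have "n - r < w r" using not_mid[of r] n3 r_pos unfolding w_def mid_mod_def by auto
    moreover have "w r < n" using n3 r_pos by (simp add: w_def)
    moreover have "w (r + 1) = (w r + c - n) mod n"
      by (simp add: w_def distrib_left mod_add_left_eq)
    ultimately have "w (r + 1) = w r + c - n"
      using c n3 mod_pos_pos_trivial[of "w r + c - n" n] by simp
    moreover have "\<not> mid_mod n r (c*(r + 1))" using not_mid wide by simp
    ultimately have "w (r + 1) < r" using \<open>w r < n\<close> c wide unfolding w_def mid_mod_def by auto
    then show ?thesis using that by blast
  qed
  have walk: "w (p + 2 * int j) = w p - d * int j" if "p + 2 * int j + 1 \<le> n - r" for j :: nat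
    using that
  proof (induction j)
    case 0
    then show ?case by simp
  next
    case (Suc j)
    then have IH: "w (p + 2 * int j) = w p - d * int j" by simp
    have "0 \<le> d * int j" using d by simp
    then have "w (p + 2 * int j) < r" using IH p(2) by linarith
    then have "w (p + 2 * int j + 2) = w (p + 2 * int j) - d"
      using two_steps[of "p + 2 * int j"] Suc.prems p(1) by auto
    then show ?case using IH by (simp add: algebra_simps)
  qed
  define K where "K = nat ((n - r - 1 - p) div 2)"
  have K: "p + 2 * int K + 1 \<le> n - r" "n - 2*r - 3 \<le> 2 * int K"
    using p(1) wide unfolding K_def by auto
  have dK: "int K \<le> d * int K" using mult_right_mono[OF d, of "int K"] by simp
  then have "w (p + 2 * int K) < r" using walk[OF K(1)] p(2) by linarith
  then have "n - r < w p - d * int K + c"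
    using two_steps[of "p + 2 * int K"] walk[OF K(1)] K(1) p(1) by auto
  then show False using dK p(2) K n3 c by linarith
qed

lemma exists_mid_mod_mult_le_half:
  fixes n c r :: int
  assumes r: "r = n div 3" and c: "1 \<le> c" "2*c \<le> n"
  shows "\<exists>x. mid_mod n r x \<and> mid_mod n r (c*x)"
proof -
  have n3: "3*r \<le> n" "n < 3*r + 3" using r by simp_all
  consider "r = 0" | "0 < r" "c \<le> n - 2*r + 1" | "0 < r" "n - 2*r + 2 \<le> c" "2*c < n"
    | "0 < r" "2*c = n"
    using c n3 by linarith
  then show ?thesis
  proof cases
    case 1
    then show ?thesis using c by (intro exI[of _ 0]) (simp add: mid_mod_def)
  next
    case 2
    then obtain x where "r \<le> x" "x \<le> n - r" "mid_mod n r (c*x)"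
      using exists_mid_mod_mult_small[OF r _ c(1)] by blast
    then show ?thesis using 2 mid_mod_of_bounds[of r x n] by auto
  next
    case 3
    then obtain x where "r \<le> x" "x \<le> n - r" "mid_mod n r (c*x)"
      using exists_mid_mod_mult_large[OF r] by blast
    then show ?thesis using 3 mid_mod_of_bounds[of r x n] by auto
  next
    case 4
    obtain x where x: "x = r \<or> x = r + 1" "odd x"
      by (cases "even r") (auto intro: that[of r] that[of "r + 1"])
    then obtain t where t: "x = 2*t + 1" by (meson oddE)
    have "c*x = c + t*n" using 4 t by (simp add: algebra_simps)
    then have "mid_mod n r (c*x)" using 4 c n3 by (simp add: mid_mod_def mod_pos_pos_trivial)
    then show ?thesis using x 4 n3 mid_mod_of_bounds[of r x n] by auto
  qed
qed

lemma exists_mid_mod_mult: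
  fixes n c r :: int
  assumes r: "r = n div 3" and n: "0 < n" and c: "\<not> n dvd c"
  shows "\<exists>x. mid_mod n r x \<and> mid_mod n r (c*x)"
proof -
  define c' where "c' = c mod n"
  have "c' \<noteq> 0" "0 \<le> c'" "c' < n" using c n by (simp_all add: c'_def dvd_eq_mod_eq_0)
  then have c': "1 \<le> c'" "c' < n" by linarith+
  have same: "mid_mod n r (c*x) \<longleftrightarrow> mid_mod n r (c'*x)" for x
    by (simp add: mid_mod_def c'_def mod_mult_left_eq)
  show ?thesis
  proof (cases "2*c' \<le> n")
    case True
    then show ?thesis using exists_mid_mod_mult_le_half[OF r c'(1)] same by simp
  next
    case False
    then obtain x where x: "mid_mod n r x" "mid_mod n r ((n - c')*x)"
      using exists_mid_mod_mult_le_half[OF r, of "n - c'"] c' by auto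
    have "c'*x = - ((n - c')*x) + x*n" by (simp add: algebra_simps)
    then have "mid_mod n r (c'*x)"
      using mid_mod_uminus[OF n x(2)] by (simp only: mid_mod_add_mult_self)
    then show ?thesis using x(1) same by blast
  qed
qed

lemma exists_mid_mod_pair_coprime:
  fixes a b n r :: int
  assumes r: "r = n div 3" and n: "0 < n" and a: "coprime a n" and b: "\<not> n dvd b"
  shows "\<exists>m. mid_mod n r (m*a) \<and> mid_mod n r (m*b)"
proof -
  obtain u v where uv: "u*a + v*n = 1"
    using bezout_int[of a n] a by (auto simp: coprime_iff_gcd_eq_1)
  have "\<not> n dvd u*b"
  proof
    assume "n dvd u*b"
    moreover have "b = b*(u*a + v*n)" using uv by simp
    then have "b = (u*b)*a + (v*b)*n" by (simp add: algebra_simps)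
    ultimately show False using b by (metis dvd_add dvd_mult dvd_mult2 dvd_triv_right)
  qed
  then obtain x where x: "mid_mod n r x" "mid_mod n r ((u*b)*x)"
    using exists_mid_mod_mult[OF r n] by blast
  have "(u*x)*a = x + (- (v*x))*n" using uv by algebra
  then have "mid_mod n r ((u*x)*a)" using x(1) by (simp only: mid_mod_add_mult_self)
  moreover have "(u*x)*b = (u*b)*x" by (simp add: ac_simps)
  ultimately show ?thesis using x(2) by metis
qed

lemma exists_mid_mod_pair_even:
  fixes a b n r :: int
  assumes r: "r = n div 3" and n: "0 < n" "even n" and a: "even a" and b: "odd b"
    and coprime: "coprime a (gcd b n)" and nontrivial: "gcd b n \<noteq> 1"
  shows "\<exists>m. mid_mod n r (m*a) \<and> mid_mod n r (m*b)"
proof -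
  obtain h where h: "n = 2*h" using n(2) by blast
  obtain a' where a': "a = 2*a'" using a by blast
  obtain b' where b': "b = 2*b' + 1" using b oddE by blast
  define d where "d = gcd b n"
  have "0 < d" using n(1) by (simp add: d_def)
  then have d: "2 \<le> d" using nontrivial unfolding d_def by linarith
  obtain e where e: "n = d*e" unfolding d_def by (meson dvd_def gcd_dvd2)
  obtain b'' where b'': "b = d*b''" unfolding d_def by (meson dvd_def gcd_dvd1)
  have "0 < e" using n(1) d e by (simp add: zero_less_mult_iff)
  obtain u v where uv: "u*a + v*d = 1"
    using bezout_int[of a d] coprime by (auto simp: d_def coprime_iff_gcd_eq_1)
  define k where "k = d div 2"
  have k: "2*k \<le> d" "d \<le> 3*k" using d by (simp_all add: k_def)
  \<comment> \<open>Modulo n: m b = h since b is odd and n dvd e b; m a = e k since a is even and u a = 1 mod d.\<close>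
  define m where "m = h + e*u*k"
  have "m*a = e*k + (a' - v*k)*n"
    unfolding m_def using h a' e uv by algebra
  moreover have "m*b = h + (b' + u*k*b'')*n"
    unfolding m_def using h b' b'' e by algebra
  moreover have "2*(e*k) \<le> n" "n \<le> 3*(e*k)"
    using mult_left_mono[OF k(1), of e] mult_left_mono[OF k(2), of e] \<open>0 < e\<close> e
    by (simp_all add: algebra_simps)
  ultimately have "mid_mod n r (m*a)" "mid_mod n r (m*b)"
    using r h mid_mod_of_bounds[of r "e*k" n] mid_mod_of_bounds[of r h n] by simp_all
  then show ?thesis by blast
qed

lemma exists_mid_mod_speeds_1_3:
  fixes v1 v2 v3 :: nat and n r :: int
  assumes pos: "0 < v1" "0 < v2" and gcd3: "gcd v1 (gcd v2 v3) = 1" and g12: "gcd v1 v2 \<le> 2"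
    and n: "n = int (v1 + v2)" and r: "r = n div 3" and not_dvd: "\<not> (v1 + v2) dvd v3"
  shows "\<exists>m. mid_mod n r (m * int v1) \<and> mid_mod n r (m * int v3)"
proof -
  have "0 < n" using pos n by simp
  have "gcd v1 v2 = 1 \<or> gcd v1 v2 = 2" using g12 gcd_pos_nat[of v1 v2] pos by linarith
  then consider "coprime v1 v2" | "coprime v3 (v1 + v2)" | "gcd v1 v2 = 2" "\<not> coprime v3 (v1 + v2)"
    by (metis coprime_iff_gcd_eq_1)
  then show ?thesis
  proof cases
    case 1
    then have "coprime (int v1) n" by (simp add: n coprime_iff_gcd_eq_1)
    moreover have "\<not> n dvd int v3" using not_dvd unfolding n int_dvd_int_iff .
    ultimately show ?thesis using exists_mid_mod_pair_coprime[OF r \<open>0 < n\<close>] by blast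
  next
    case 2
    then have "coprime (int v3) n" unfolding n coprime_int_iff .
    moreover have "\<not> n dvd int v1" using pos by (auto simp: n dest: zdvd_imp_le)
    ultimately show ?thesis using exists_mid_mod_pair_coprime[OF r \<open>0 < n\<close>] by blast
  next
    case 3
    then have "even v1" "even v2" by (metis gcd_dvd1 gcd_dvd2)+
    have "odd v3"
    proof
      assume "even v3"
      then have "2 dvd gcd v1 (gcd v2 v3)" using \<open>even v1\<close> \<open>even v2\<close> by simp
      then show False using gcd3 by simp
    qed
    have "gcd v1 (gcd v3 (v1 + v2)) = gcd (gcd v1 (v1 + v2)) v3"
      by (simp only: gcd.assoc gcd.commute gcd.left_commute)
    then have "coprime v1 (gcd v3 (v1 + v2))"
      using gcd3 by (simp add: coprime_iff_gcd_eq_1 ac_simps)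
    then have "coprime (int v1) (gcd (int v3) n)"
      unfolding n gcd_int_int_eq coprime_int_iff .
    moreover have "gcd (int v3) n \<noteq> 1"
      using 3(2) unfolding n gcd_int_int_eq coprime_iff_gcd_eq_1 by simp
    ultimately show ?thesis
      using exists_mid_mod_pair_even[OF r \<open>0 < n\<close>] \<open>even v1\<close> \<open>even v2\<close> \<open>odd v3\<close>
      by (simp add: n)
  qed
qed

lemma exists_mid_mod_speeds:
  fixes v1 v2 v3 :: nat and n r :: int
  assumes pos: "0 < v1" "0 < v2" and gcd3: "gcd v1 (gcd v2 v3) = 1" and g12: "gcd v1 v2 \<le> 2"
    and n: "n = int (v1 + v2)" and r: "r = n div 3" and not_dvd: "\<not> (v1 + v2) dvd v3"
  shows "\<exists>m. mid_mod n r (m * int v1) \<and> mid_mod n r (m * int v2) \<and> mid_mod n r (m * int v3)"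
proof -
  obtain m where m: "mid_mod n r (m * int v1)" "mid_mod n r (m * int v3)"
    using exists_mid_mod_speeds_1_3[OF assms] by blast
  have "0 < n" using pos n by simp
  have "m * int v2 = - (m * int v1) + m * n" by (simp add: n algebra_simps)
  then have "mid_mod n r (m * int v2)"
    using mid_mod_uminus[OF \<open>0 < n\<close> m(1)] by (simp only: mid_mod_add_mult_self)
  then show ?thesis using m by blast
qed

lemma loneliness3_ge_if_mid_mod:
  fixes v1 v2 v3 :: nat and m n r :: int
  assumes "0 < n" "mid_mod n r (m * int v1)" "mid_mod n r (m * int v2)" "mid_mod n r (m * int v3)"
  shows "of_int r / of_int n \<le> loneliness3 v1 v2 v3 (of_int m / of_int n)"
proof -
  have "of_int r / of_int n \<le> dist_nint (of_int m / of_int n * real v)"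
    if "mid_mod n r (m * int v)" for v
  proof -
    have "of_int m / of_int n * real v = of_int (m * int v) / of_int n" by simp
    then show ?thesis using dist_nint_ge_if_mid_mod[OF assms(1) that] by simp
  qed
  then show ?thesis using assms(2-4) unfolding loneliness3_def by simp
qed

lemma loneliness3_le_one: "loneliness3 v1 v2 v3 t \<le> 1"
  unfolding loneliness3_def using dist_nint_le_one by (simp add: min.coboundedI1)

lemma loneliness3_eq_0_if_dvd:
  fixes v1 v2 v3 n :: nat and m :: int
  assumes "0 < n" "n dvd v3"
  shows "loneliness3 v1 v2 v3 (of_int m / real n) = 0"
proof -
  obtain q where "v3 = n * q" using assms(2) ..
  then have "of_int m / real n * real v3 = of_int (m * int q)" using assms(1) by simp
  then have "dist_nint (of_int m / real n * real v3) = 0" by (simp only: dist_nint_of_int)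
  then show ?thesis unfolding loneliness3_def by (simp add: dist_nint_nonneg)
qed

theorem lemma7p1:
  fixes v1 v2 v3 :: nat and r :: nat and L :: real
  assumes pos: "v1 > 0" "v2 > 0" "v3 > 0"
    and gcd3: "gcd v1 (gcd v2 v3) = 1"
    and g12: "gcd v1 v2 \<le> 2" and g13: "gcd v1 v3 \<le> 2" and g23: "gcd v2 v3 \<le> 2"
    and r_def: "r = (v1 + v2) div 3"
    and L_def: "L = (SUP m::int. loneliness3 v1 v2 v3 (real_of_int m / real (v1 + v2)))"
  shows "((v1 + v2) dvd v3 \<longrightarrow> L = 0) \<and>
         (\<not> (v1 + v2) dvd v3 \<longrightarrow> L \<ge> real r / real (v1 + v2))"
proof -
  have n: "0 < v1 + v2" using pos by simp
  have "L = 0" if "(v1 + v2) dvd v3"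
    using loneliness3_eq_0_if_dvd[OF n that] by (simp add: L_def)
  moreover have "real r / real (v1 + v2) \<le> L" if not_dvd: "\<not> (v1 + v2) dvd v3"
  proof -
    have "int r = int (v1 + v2) div 3" using r_def by (simp add: zdiv_int)
    then obtain m where "mid_mod (int (v1 + v2)) (int r) (m * int v1)"
      "mid_mod (int (v1 + v2)) (int r) (m * int v2)" "mid_mod (int (v1 + v2)) (int r) (m * int v3)"
      using exists_mid_mod_speeds[OF pos(1,2) gcd3 g12 refl _ not_dvd] by blast
    then have "real r / real (v1 + v2) \<le> loneliness3 v1 v2 v3 (of_int m / real (v1 + v2))"
      using loneliness3_ge_if_mid_mod[of "int (v1 + v2)" "int r" m] n by simp
    also have "\<dots> \<le> L"
      unfolding L_def by (rule cSUP_upper) (auto intro: bdd_aboveI loneliness3_le_one)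
    finally show ?thesis .
  qed
  ultimately show ?thesis by blast
qed

end
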